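(* Let $\Sigma$ be the ensemble system $$\frac{d}{dt}x(t,\beta)=F(x(t,\beta),\beta,u(t)),\qquad Y_t=h(x_t(\Omega)),\qquad \beta\in\Omega,$$ with state space $\mathcal{F}(\Omega,M)$, output function $h:M\to N$ and output measures $\mu_t=(h\circ x_t)_\#\lambda\in\mathcal{P}(N)$. Equip $\mathcal{F}(\Omega,M)$ with the metric $$d_F(f_1,f_2)=\int_\Omega \frac{\rho(f_1(\beta),f_2(\beta))}{1+\rho(f_1(\beta),f_2(\beta))}\,d\lambda(\beta),$$ where $\rho$ is the Riemannian distance on $M$. Equip $\mathcal{P}(N)$ with a metric $d_P$ metrizing the weak topology. Assume that $\Sigma$ is ensemble controllable on $(\mathcal{F}(\Omega,M),d_F)$ and that $h:M\to N$ is continuous and surjective. Then $\Sigma$ is pattern controllable on $(\mathcal{P}(N),d_P)$.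
   Context: Standing setup. - $\Omega\subset\mathbb{R}^d$ is compact, and $\lambda$ is an atomless Borel probability measure on $\Omega$. - $M$ is a Riemannian manifold and $N$ is a Polish metric space. - Controls are measurable functions $u:[0,T]\to\mathbb{R}^p$, and the same control is applied to every $\beta\in\Omega$. - $\mathcal{F}(\Omega,M)$ denotes the space of Borel measurable maps $\Omega\to M$. For each $t$, $x_t=x(t,\cdot)\in\mathcal{F}(\Omega,M)$. - $\mathcal{P}(N)$ denotes the space of Borel probability measures on $N$. The output measure at time $t$ is the pushforward $\mu_t=(y_t)_\#\lambda$, where $y_t(\beta)=h(x_t(\beta))$; that is, $\mu_t(B)=\lambda(y_t^{-1}(B))$ for Borel $B\subseteq N$. Ensemble controllability on $\mathcal{F}(\Omega,M)$ with respect to a metric $d_F$: for every initial state $x_0\in\mathcal{F}(\Omega,M)$, every target $x_F\in\mathcal{F}(\Omega,M)$ and every $\varepsilon>0$, there exist a finite time $T>0$ and a measurable control $u$ such that the solution satisfies $d_F(x_T,x_F)<\varepsilon$. Pattern controllability on $\mathcal{P}(N)$ with respect to $d_P$: for every initial state (inducing the initial output measure $\mu_0$), every target $\mu_F\in\mathcal{P}(N)$ and every $\varepsilon>0$, there exist a finite $T>0$ and a measurable control $u$ such that $d_P(\mu_T,\mu_F)<\varepsilon$. *)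

theory Defs
  imports "HOL-Probability.Probability"
begin

definition prob_measures :: "'n::topological_space measure set" where
  "prob_measures = {\<mu>. prob_space \<mu> \<and> sets \<mu> = sets borel}"

definition weak_topology :: "'n::topological_space measure topology" where
  "weak_topology = topology_generated_by
     {{\<mu> \<in> prob_measures. (\<integral>y. (f::'n \<Rightarrow> real) y \<partial>\<mu>) \<in> U} | f U.
        continuous_on UNIV f \<and> bounded (range f) \<and> open U}"

definition metrizes_weak_topology :: "('n::topological_space measure \<Rightarrow> 'n measure \<Rightarrow> real) \<Rightarrow> bool" where
  "metrizes_weak_topology dP \<longleftrightarrow>
     Metric_space prob_measures dP \<and> Metric_space.mtopology prob_measures dP = weak_topology"

definition dF :: "'a measure \<Rightarrow> ('a \<Rightarrow> 'm::metric_space) \<Rightarrow> ('a \<Rightarrow> 'm) \<Rightarrow> real" where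
  "dF lam f1 f2 = (\<integral>\<beta>. dist (f1 \<beta>) (f2 \<beta>) / (1 + dist (f1 \<beta>) (f2 \<beta>)) \<partial>lam)"

text \<open>The ensemble system is given abstractly by its solution relation:
  Sys T u x0 xT means that the solution of the system with control u starting at
  the ensemble state x0 is equal to xT at time T.\<close>

definition ensemble_controllable ::
  "'a measure \<Rightarrow> (real \<Rightarrow> (real \<Rightarrow> 'p::euclidean_space) \<Rightarrow> ('a \<Rightarrow> 'm::metric_space) \<Rightarrow> ('a \<Rightarrow> 'm) \<Rightarrow> bool) \<Rightarrow> bool" where
  "ensemble_controllable lam Sys \<longleftrightarrow>
     (\<forall>x0 \<in> borel_measurable lam. \<forall>xF \<in> borel_measurable lam. \<forall>\<epsilon>>0.
        \<exists>T>0. \<exists>u \<in> borel_measurable borel. \<exists>xT. Sys T u x0 xT \<and> dF lam xT xF < \<epsilon>)"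

definition pattern_controllable ::
  "'a measure \<Rightarrow> (real \<Rightarrow> (real \<Rightarrow> 'p::euclidean_space) \<Rightarrow> ('a \<Rightarrow> 'm::metric_space) \<Rightarrow> ('a \<Rightarrow> 'm) \<Rightarrow> bool)
     \<Rightarrow> ('m \<Rightarrow> 'n::topological_space) \<Rightarrow> ('n measure \<Rightarrow> 'n measure \<Rightarrow> real) \<Rightarrow> bool" where
  "pattern_controllable lam Sys h dP \<longleftrightarrow>
     (\<forall>x0 \<in> borel_measurable lam. \<forall>\<mu>F \<in> prob_measures. \<forall>\<epsilon>>0.
        \<exists>T>0. \<exists>u \<in> borel_measurable borel. \<exists>xT. Sys T u x0 xT \<and>
          dP (distr lam borel (h \<circ> xT)) \<mu>F < \<epsilon>)"

end

theory Submission
  imports Defs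
begin

(* A weak neighbourhood of the target \<mu>F contains all \<mu> with |\<integral>g d\<mu> - \<integral>g d\<mu>F| < \<eta> for finitely
   many bounded continuous test functions g. Quantizing N by the values of these g, and realizing the
   cell probabilities of \<mu>F on the atomless space (\<Omega>, \<lambda>) through a uniform random variable (the
   distribution function of a Borel injection \<Omega> \<rightarrow> \<real>), gives a finitely valued state xF whose output
   measure approximates \<mu>F on every test function; surjectivity of h provides states above the cell
   representatives. For finitely valued xF the map x \<mapsto> \<integral>g(h(x \<beta>)) d\<lambda> is d_F-continuous at xF, so
   steering the ensemble close to xF steers the output measure into the neighbourhood. *)

definition integral_nbhd :: "('n::topological_space \<Rightarrow> real) set \<Rightarrow> real \<Rightarrow> 'n measure \<Rightarrow> 'n measure set" where
  "integral_nbhd Fs \<eta> \<nu> = {\<mu> \<in> prob_measures. \<forall>g\<in>Fs. \<bar>(\<integral>y. g y \<partial>\<mu>) - (\<integral>y. g y \<partial>\<nu>)\<bar> < \<eta>}"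

definition integral_open :: "'n::topological_space measure set \<Rightarrow> bool" where
  "integral_open W \<longleftrightarrow> (\<forall>\<nu>\<in>W. \<exists>Fs \<eta>. finite Fs \<and> \<eta> > 0 \<and>
     (\<forall>g\<in>Fs. continuous_on UNIV g \<and> bounded (range g)) \<and> integral_nbhd Fs \<eta> \<nu> \<subseteq> W)"

lemma integral_openE:
  assumes "integral_open W" "\<nu> \<in> W"
  obtains Fs \<eta> where "finite Fs" "\<eta> > 0" "\<forall>g\<in>Fs. continuous_on UNIV g \<and> bounded (range g)"
    "integral_nbhd Fs \<eta> \<nu> \<subseteq> W"
proof -
  have "\<exists>Fs \<eta>. finite Fs \<and> \<eta> > 0 \<and> (\<forall>g\<in>Fs. continuous_on UNIV g \<and> bounded (range g)) \<and>
      integral_nbhd Fs \<eta> \<nu> \<subseteq> W"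
    using assms unfolding integral_open_def by (rule bspec)
  then show ?thesis using that by (elim exE conjE)
qed

lemma integral_nbhd_Un_subset:
  "integral_nbhd (F1 \<union> F2) (min \<eta>1 \<eta>2) \<nu> \<subseteq> integral_nbhd F1 \<eta>1 \<nu> \<inter> integral_nbhd F2 \<eta>2 \<nu>"
  unfolding integral_nbhd_def by auto

lemma integral_open_Int:
  assumes "integral_open V" "integral_open W"
  shows "integral_open (V \<inter> W)"
  unfolding integral_open_def
proof
  fix \<nu> assume \<nu>: "\<nu> \<in> V \<inter> W"
  obtain F1 \<eta>1 where F1: "finite F1" "\<eta>1 > 0" "\<forall>g\<in>F1. continuous_on UNIV g \<and> bounded (range g)"
      "integral_nbhd F1 \<eta>1 \<nu> \<subseteq> V"
    using assms(1) IntD1[OF \<nu>] by (rule integral_openE)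
  obtain F2 \<eta>2 where F2: "finite F2" "\<eta>2 > 0" "\<forall>g\<in>F2. continuous_on UNIV g \<and> bounded (range g)"
      "integral_nbhd F2 \<eta>2 \<nu> \<subseteq> W"
    using assms(2) IntD2[OF \<nu>] by (rule integral_openE)
  have "integral_nbhd (F1 \<union> F2) (min \<eta>1 \<eta>2) \<nu> \<subseteq> V \<inter> W"
    using integral_nbhd_Un_subset F1(4) F2(4) by blast
  with F1 F2 show "\<exists>Fs \<eta>. finite Fs \<and> \<eta> > 0 \<and> (\<forall>g\<in>Fs. continuous_on UNIV g \<and> bounded (range g)) \<and>
      integral_nbhd Fs \<eta> \<nu> \<subseteq> V \<inter> W"
    by (intro exI[of _ "F1 \<union> F2"] exI[of _ "min \<eta>1 \<eta>2"]) auto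
qed

lemma integral_open_subbasis:
  fixes f :: "'n::topological_space \<Rightarrow> real"
  assumes f: "continuous_on UNIV f" "bounded (range f)" and "open U"
  shows "integral_open {\<mu> \<in> prob_measures. (\<integral>y. f y \<partial>\<mu>) \<in> U}"
  unfolding integral_open_def
proof
  fix \<nu> assume "\<nu> \<in> {\<mu> \<in> prob_measures. (\<integral>y. f y \<partial>\<mu>) \<in> U}"
  then obtain e where "e > 0" and e: "ball (\<integral>y. f y \<partial>\<nu>) e \<subseteq> U"
    using \<open>open U\<close> open_contains_ball by blast
  have "integral_nbhd {f} e \<nu> \<subseteq> {\<mu> \<in> prob_measures. (\<integral>y. f y \<partial>\<mu>) \<in> U}"
  proof
    fix \<mu> assume "\<mu> \<in> integral_nbhd {f} e \<nu>"
    then have "\<mu> \<in> prob_measures" "dist (\<integral>y. f y \<partial>\<mu>) (\<integral>y. f y \<partial>\<nu>) < e"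
      unfolding integral_nbhd_def dist_real_def by auto
    then show "\<mu> \<in> {\<mu> \<in> prob_measures. (\<integral>y. f y \<partial>\<mu>) \<in> U}"
      using e by (auto simp: dist_commute)
  qed
  then show "\<exists>Fs \<eta>. finite Fs \<and> \<eta> > 0 \<and> (\<forall>g\<in>Fs. continuous_on UNIV g \<and> bounded (range g)) \<and>
      integral_nbhd Fs \<eta> \<nu> \<subseteq> {\<mu> \<in> prob_measures. (\<integral>y. f y \<partial>\<mu>) \<in> U}"
    using f \<open>e > 0\<close> by (intro exI[of _ "{f}"] exI[of _ e]) auto
qed

lemma integral_open_Union:
  assumes "\<And>W. W \<in> K \<Longrightarrow> integral_open W"
  shows "integral_open (\<Union>K)"
  unfolding integral_open_def
proof
  fix \<nu> assume "\<nu> \<in> \<Union>K"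
  then obtain W where "W \<in> K" "\<nu> \<in> W" by blast
  then obtain Fs \<eta> where "finite Fs" "\<eta> > 0" "\<forall>g\<in>Fs. continuous_on UNIV g \<and> bounded (range g)"
      "integral_nbhd Fs \<eta> \<nu> \<subseteq> W"
    using assms[of W] by (auto elim: integral_openE)
  with \<open>W \<in> K\<close> show "\<exists>Fs \<eta>. finite Fs \<and> \<eta> > 0 \<and> (\<forall>g\<in>Fs. continuous_on UNIV g \<and> bounded (range g)) \<and>
      integral_nbhd Fs \<eta> \<nu> \<subseteq> \<Union>K"
    by blast
qed

lemma openin_weak_topology_integral_open:
  assumes "openin weak_topology W"
  shows "integral_open W"
  using assms unfolding weak_topology_def openin_topology_generated_by_iff
proof induction
  case Empty
  then show ?case by (simp add: integral_open_def)
next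
  case (Int a b)
  show ?case by (rule integral_open_Int[OF Int.IH])
next
  case (UN K)
  then show ?case by (intro integral_open_Union) blast
next
  case (Basis s)
  then show ?case by (auto intro: integral_open_subbasis)
qed

lemma metrizes_weak_topology_ball_contains_integral_nbhd:
  assumes "metrizes_weak_topology dP" "\<mu>F \<in> prob_measures" "\<epsilon> > 0"
  obtains Fs \<eta> where "finite Fs" "\<eta> > 0" "\<forall>g\<in>Fs. continuous_on UNIV g \<and> bounded (range g)"
    "integral_nbhd Fs \<eta> \<mu>F \<subseteq> {\<mu>. dP \<mu> \<mu>F < \<epsilon>}"
proof -
  interpret Metric_space prob_measures dP
    using assms(1) unfolding metrizes_weak_topology_def by auto
  have "openin mtopology (mball \<mu>F \<epsilon>)" by simp
  then have "openin weak_topology (mball \<mu>F \<epsilon>)"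
    using assms(1) unfolding metrizes_weak_topology_def by simp
  then have "integral_open (mball \<mu>F \<epsilon>)" by (rule openin_weak_topology_integral_open)
  moreover have "\<mu>F \<in> mball \<mu>F \<epsilon>" using assms by simp
  ultimately obtain Fs \<eta> where "finite Fs" "\<eta> > 0" "\<forall>g\<in>Fs. continuous_on UNIV g \<and> bounded (range g)"
      "integral_nbhd Fs \<eta> \<mu>F \<subseteq> mball \<mu>F \<epsilon>"
    by (rule integral_openE)
  moreover have "mball \<mu>F \<epsilon> \<subseteq> {\<mu>. dP \<mu> \<mu>F < \<epsilon>}" by (auto simp: commute)
  ultimately show ?thesis using that by blast
qed

lemma continuous_finite_set_modulus:
  fixes f :: "'m::metric_space \<Rightarrow> real"
  assumes "finite V" "continuous_on UNIV f" "bounded (range f)" "\<eta> > 0"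
  obtains C where "C \<ge> 0"
    "\<And>v x. v \<in> V \<Longrightarrow> \<bar>f x - f v\<bar> \<le> \<eta> + C * (dist x v / (1 + dist x v))"
proof -
  have "\<forall>v. \<exists>d>0. \<forall>x. dist x v < d \<longrightarrow> \<bar>f x - f v\<bar> < \<eta>"
    using assms(2,4) unfolding continuous_on_iff dist_real_def by blast
  then have "\<exists>r. \<forall>v. r v > 0 \<and> (\<forall>x. dist x v < r v \<longrightarrow> \<bar>f x - f v\<bar> < \<eta>)"
    by (rule choice)
  then obtain r where "\<forall>v. r v > 0 \<and> (\<forall>x. dist x v < r v \<longrightarrow> \<bar>f x - f v\<bar> < \<eta>)" by blast
  then have r_pos: "\<And>v. r v > 0" and r: "\<And>v x. dist x v < r v \<Longrightarrow> \<bar>f x - f v\<bar> < \<eta>"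
    by auto
  define r0 where "r0 = Min (insert 1 (r ` V))"
  have "r0 > 0" and r0_le: "\<And>v. v \<in> V \<Longrightarrow> r0 \<le> r v"
    unfolding r0_def using assms(1) r_pos by auto
  obtain B where B: "\<And>x. \<bar>f x\<bar> \<le> B"
    using assms(3) unfolding bounded_iff by auto
  \<comment> \<open>Away from V the factor \<open>dist x v / (1 + dist x v)\<close> is at least \<open>r0 / (1 + r0)\<close>,
    so this C makes the second term dominate the oscillation \<open>2 * B\<close>.\<close>
  define C where "C = 2 * B * (1 + r0) / r0"
  have "C \<ge> 0" unfolding C_def using B[of undefined] \<open>r0 > 0\<close> by simp
  moreover have "\<bar>f x - f v\<bar> \<le> \<eta> + C * (dist x v / (1 + dist x v))" if "v \<in> V" for v x
  proof (cases "dist x v < r0")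
    case True
    then show ?thesis
      using r[of x v] r0_le[OF that] \<open>C \<ge> 0\<close> by (simp add: add_increasing2)
  next
    case False
    have "r0 / (1 + r0) \<le> dist x v / (1 + dist x v)"
      using False \<open>r0 > 0\<close> by (simp add: divide_simps, simp add: algebra_simps)
    then have "C * (r0 / (1 + r0)) \<le> C * (dist x v / (1 + dist x v))"
      using \<open>C \<ge> 0\<close> by (rule mult_left_mono)
    moreover have "C * (r0 / (1 + r0)) = 2 * B"
      unfolding C_def using \<open>r0 > 0\<close> by (simp add: divide_simps)
    ultimately show ?thesis using B[of x] B[of v] \<open>\<eta> > 0\<close> by linarith
  qed
  ultimately show ?thesis by (rule that)
qed

lemma eventually_dF_small_integral_close:
  fixes xF :: "'a \<Rightarrow> 'm::{metric_space, second_countable_topology}" and f :: "'m \<Rightarrow> real"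
  assumes lam: "prob_space lam" and xF: "xF \<in> borel_measurable lam" "finite (xF ` space lam)"
    and f: "continuous_on UNIV f" "bounded (range f)" and "\<eta> > 0"
  shows "\<forall>\<^sub>F \<delta> in at_right 0. \<forall>x \<in> borel_measurable lam. dF lam x xF < \<delta> \<longrightarrow>
           \<bar>(\<integral>\<beta>. f (x \<beta>) \<partial>lam) - (\<integral>\<beta>. f (xF \<beta>) \<partial>lam)\<bar> < \<eta>"
proof -
  interpret prob_space lam by (rule lam)
  obtain C where "C \<ge> 0" and C: "\<And>v x. v \<in> xF ` space lam \<Longrightarrow>
      \<bar>f x - f v\<bar> \<le> \<eta>/2 + C * (dist x v / (1 + dist x v))"
    using continuous_finite_set_modulus[OF xF(2) f, of "\<eta>/2"] \<open>\<eta> > 0\<close> by auto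
  obtain B where B: "\<And>y. \<bar>f y\<bar> \<le> B" using f(2) unfolding bounded_iff by auto
  have [measurable]: "f \<in> borel_measurable borel"
    using f(1) by (rule borel_measurable_continuous_onI)
  have "\<bar>(\<integral>\<beta>. f (x \<beta>) \<partial>lam) - (\<integral>\<beta>. f (xF \<beta>) \<partial>lam)\<bar> < \<eta>"
    if x: "x \<in> borel_measurable lam" and "dF lam x xF < \<eta> / (2 * (C + 1))" for x
  proof -
    define \<phi> where "\<phi> \<beta> = dist (x \<beta>) (xF \<beta>) / (1 + dist (x \<beta>) (xF \<beta>))" for \<beta>
    have [measurable]: "x \<in> borel_measurable lam" "xF \<in> borel_measurable lam" using x xF by auto
    have int_x: "integrable lam (\<lambda>\<beta>. f (x \<beta>))" and int_xF: "integrable lam (\<lambda>\<beta>. f (xF \<beta>))"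
      by (auto intro!: integrable_const_bound[where B=B] simp: B)
    have "\<phi> \<in> borel_measurable lam" unfolding \<phi>_def by measurable
    moreover have "\<bar>\<phi> \<beta>\<bar> \<le> 1" for \<beta> by (simp add: \<phi>_def divide_le_eq_1 add_pos_nonneg)
    ultimately have int_\<phi>: "integrable lam \<phi>" by (intro integrable_const_bound[where B=1]) auto
    have "C * dF lam x xF \<le> C * (\<eta> / (2 * (C + 1)))"
      using \<open>C \<ge> 0\<close> \<open>dF lam x xF < _\<close> by (intro mult_left_mono) auto
    also have "\<dots> < \<eta>/2" using \<open>C \<ge> 0\<close> \<open>\<eta> > 0\<close> by (simp add: field_simps)
    finally have small: "C * dF lam x xF < \<eta>/2" .
    have "\<bar>(\<integral>\<beta>. f (x \<beta>) \<partial>lam) - (\<integral>\<beta>. f (xF \<beta>) \<partial>lam)\<bar> \<le> (\<integral>\<beta>. \<bar>f (x \<beta>) - f (xF \<beta>)\<bar> \<partial>lam)"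
      using int_x int_xF by (simp flip: Bochner_Integration.integral_diff add: integral_abs_bound)
    also have "\<dots> \<le> (\<integral>\<beta>. \<eta>/2 + C * \<phi> \<beta> \<partial>lam)"
    proof (rule integral_mono)
      show "integrable lam (\<lambda>\<beta>. \<eta>/2 + C * \<phi> \<beta>)" using int_\<phi> by auto
      show "\<bar>f (x \<beta>) - f (xF \<beta>)\<bar> \<le> \<eta>/2 + C * \<phi> \<beta>" if "\<beta> \<in> space lam" for \<beta>
        using C[of "xF \<beta>" "x \<beta>"] that unfolding \<phi>_def by blast
    qed (use int_x int_xF in auto)
    also have "\<dots> = \<eta>/2 + C * (\<integral>\<beta>. \<phi> \<beta> \<partial>lam)"
      using int_\<phi> by (simp add: prob_space)
    also have "\<dots> = \<eta>/2 + C * dF lam x xF"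
      unfolding dF_def \<phi>_def ..
    finally show ?thesis using small by linarith
  qed
  moreover have "\<eta> / (2 * (C + 1)) > 0" using \<open>C \<ge> 0\<close> \<open>\<eta> > 0\<close> by simp
  ultimately show ?thesis
    by (auto simp: eventually_at_right_field intro!: exI[of _ "\<eta> / (2 * (C + 1))"])
qed

lemma integral_finite_valued_index:
  fixes g :: "nat \<Rightarrow> real"
  assumes "finite_measure M" "J \<in> measurable M (count_space UNIV)" "\<And>x. x \<in> space M \<Longrightarrow> J x < n"
  shows "(\<integral>x. g (J x) \<partial>M) = (\<Sum>j<n. g j * measure M {x\<in>space M. J x = j})"
proof -
  interpret finite_measure M by fact
  have "(\<integral>x. g (J x) \<partial>M) = (\<integral>x. g (J x) * indicator {..<n} (J x) \<partial>M)"
    using assms(3) by (intro Bochner_Integration.integral_cong) auto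
  also have "\<dots> = (\<integral>j. g j * indicator {..<n} j \<partial>distr M (count_space UNIV) J)"
    using assms(2) by (rule integral_distr[symmetric]) simp
  also have "\<dots> = (\<Sum>j<n. g j * measure (distr M (count_space UNIV) J) {j})"
    by (rule integral_indicator_finite_real)
      (auto simp: emeasure_distr[OF assms(2)] less_top[symmetric] emeasure_finite)
  also have "\<dots> = (\<Sum>j<n. g j * measure M {x\<in>space M. J x = j})"
    using assms(2) by (intro sum.cong refl) (simp add: measure_distr vimage_def Int_def conj_commute)
  finally show ?thesis .
qed

lemma ternary_series_nonzero:
  fixes c :: "nat \<Rightarrow> real"
  assumes bound: "\<And>n. \<bar>c n\<bar> \<le> 1" and zero: "\<And>n. n < k \<Longrightarrow> c n = 0" and "\<bar>c k\<bar> = 1"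
  shows "(\<Sum>n. c n * (1/3)^n) \<noteq> 0"
proof -
  have geom: "summable (\<lambda>n. (1/3::real)^n)" by (rule summable_geometric) simp
  then have tail_geom: "summable (\<lambda>n. (1/3::real)^(n + Suc k))" by (simp only: summable_iff_shift)
  have norm_le: "norm (c n * (1/3)^n) \<le> (1/3::real)^n" for n
    using bound[of n] by (simp add: abs_mult mult_left_le_one_le)
  have summable: "summable (\<lambda>n. c n * (1/3)^n)"
    using geom norm_le by (rule summable_comparison_test'[where N=0])
  have tail_summable: "summable (\<lambda>n. norm (c (n + Suc k) * (1/3)^(n + Suc k)))"
    using tail_geom by (rule summable_comparison_test'[where N=0]) (metis abs_norm_cancel norm_le real_norm_def)
  define T where "T = (\<Sum>n. c (n + Suc k) * (1/3::real)^(n + Suc k))"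
  define S where "S = (\<Sum>n. c n * (1/3::real)^n)"
  have "\<bar>T\<bar> \<le> (\<Sum>n. norm (c (n + Suc k) * (1/3)^(n + Suc k)))"
    unfolding T_def using summable_norm[OF tail_summable] by simp
  also have "\<dots> \<le> (\<Sum>n. (1/3::real)^(n + Suc k))"
    by (rule suminf_le[OF _ tail_summable tail_geom]) (rule norm_le)
  also have "\<dots> = (\<Sum>n. (1/3)^(Suc k) * (1/3::real)^n)"
    by (rule suminf_cong) (simp add: power_add)
  also have "\<dots> = (1/3)^(Suc k) * (\<Sum>n. (1/3::real)^n)"
    by (rule suminf_mult[OF geom])
  also have "\<dots> = (1/3)^k / 2"
    by (simp add: suminf_geometric)
  finally have tail: "\<bar>T\<bar> \<le> (1/3)^k / 2" .
  have "(\<Sum>n<Suc k. c n * (1/3)^n) = c k * (1/3)^k"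
    using zero by (simp add: sum.neutral)
  then have "S = T + c k * (1/3)^k"
    unfolding S_def T_def using suminf_split_initial_segment[OF summable, of "Suc k"] by simp
  then have "\<bar>c k * (1/3)^k\<bar> \<le> \<bar>S\<bar> + \<bar>T\<bar>"
    using abs_triangle_ineq4[of S T] by simp
  moreover have "\<bar>c k * (1/3::real)^k\<bar> = (1/3)^k" using \<open>\<bar>c k\<bar> = 1\<close> by (simp add: abs_mult)
  moreover have "(1/3::real)^k > 0" by simp
  ultimately have "\<bar>S\<bar> > 0" using tail by linarith
  then show ?thesis unfolding S_def by simp
qed

lemma ternary_series_eq_imp_eq:
  fixes a b :: "nat \<Rightarrow> real"
  assumes "\<And>n. a n \<in> {0, 1}" "\<And>n. b n \<in> {0, 1}" and eq: "(\<Sum>n. a n * (1/3)^n) = (\<Sum>n. b n * (1/3)^n)"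
  shows "a = b"
proof (rule ccontr)
  assume "a \<noteq> b"
  then have "\<exists>n. a n \<noteq> b n" by auto
  define k where "k = (LEAST n. a n \<noteq> b n)"
  have k: "a k \<noteq> b k" "\<And>n. n < k \<Longrightarrow> a n = b n"
    unfolding k_def using LeastI_ex[OF \<open>\<exists>n. a n \<noteq> b n\<close>] not_less_Least by auto
  have geom: "summable (\<lambda>n. (1/3::real)^n)" by (rule summable_geometric) simp
  have "\<bar>a n\<bar> \<le> 1" "\<bar>b n\<bar> \<le> 1" for n using assms(1,2)[of n] by auto
  then have "summable (\<lambda>n. a n * (1/3)^n)" "summable (\<lambda>n. b n * (1/3)^n)"
    by (auto intro!: summable_comparison_test'[OF geom, where N=0] simp: abs_mult mult_left_le_one_le)
  then have diff_zero: "(\<Sum>n. (a n - b n) * (1/3)^n) = 0"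
    using eq by (simp add: suminf_diff[symmetric] left_diff_distrib)
  have "(\<Sum>n. (a n - b n) * (1/3)^n) \<noteq> 0"
  proof (rule ternary_series_nonzero)
    show "\<bar>a n - b n\<bar> \<le> 1" for n using assms(1,2)[of n] by auto
    show "a n - b n = 0" if "n < k" for n using k(2)[OF that] by simp
    show "\<bar>a k - b k\<bar> = 1" using assms(1,2)[of k] k(1) by auto
  qed
  then show False using diff_zero by contradiction
qed

lemma borel_measurable_injection_to_real:
  obtains \<psi> :: "'a::{second_countable_topology, t1_space} \<Rightarrow> real"
  where "inj \<psi>" "\<psi> \<in> borel_measurable borel"
proof -
  obtain B :: "'a set set" where B: "countable B" "topological_basis B"
    using ex_countable_basis by blast
  have "B \<noteq> {}" using B(2) topological_basis_def[of B] open_UNIV by auto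
  define e where "e = from_nat_into B"
  have open_e: "open (e n)" for n
    unfolding e_def using from_nat_into[OF \<open>B \<noteq> {}\<close>] B(2) topological_basis_open by blast
  \<comment> \<open>A ternary expansion with digits 0 and 1 determines its digits, and the basis separates points.\<close>
  define \<psi> where "\<psi> x = (\<Sum>n. indicator (e n) x * (1/3::real)^n)" for x
  have "inj \<psi>"
  proof (rule injI, rule ccontr)
    fix x y assume "\<psi> x = \<psi> y" "x \<noteq> y"
    then have "(\<lambda>n. indicator (e n) x) = (\<lambda>n. indicator (e n) y :: real)"
      unfolding \<psi>_def by (intro ternary_series_eq_imp_eq) (auto simp: indicator_def)
    moreover obtain U where "open U" "x \<in> U" "y \<notin> U" using t1_space[OF \<open>x \<noteq> y\<close>] by blast
    then obtain b where "b \<in> B" "x \<in> b" "b \<subseteq> U" using B(2) by (meson topological_basisE)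
    moreover obtain n where "e n = b" using from_nat_into_surj[OF B(1) \<open>b \<in> B\<close>] unfolding e_def by blast
    ultimately show False using \<open>y \<notin> U\<close> by (metis indicator_simps subsetD zero_neq_one)
  qed
  moreover have "\<psi> \<in> borel_measurable borel"
    unfolding \<psi>_def using open_e by (intro borel_measurable_suminf) auto
  ultimately show ?thesis using that by blast
qed

lemma measure_cdf_sublevel:
  assumes "real_distribution \<nu>" "\<And>t. measure \<nu> {t} = 0" "0 \<le> s" "s \<le> 1"
  shows "measure \<nu> {t. cdf \<nu> t \<le> s} = s"
proof -
  interpret real_distribution \<nu> by fact
  define F where "F = cdf \<nu>"
  have cont: "continuous_on UNIV F"
    unfolding F_def using isCont_cdf assms(2) by (simp add: continuous_at_imp_continuous_on)
  consider "s = 1" | "s < 1" "{t. F t \<le> s} = {}" | "s < 1" "{t. F t \<le> s} \<noteq> {}"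
    using assms(4) by fastforce
  then show ?thesis
  proof cases
    case 1
    then have "{t. cdf \<nu> t \<le> s} = space \<nu>" using cdf_bounded_prob by auto
    then show ?thesis using 1 prob_space by simp
  next
    case 2
    have "s = 0"
    proof (rule ccontr)
      assume "s \<noteq> 0"
      then have "\<forall>\<^sub>F t in at_bot. F t < s"
        using assms(3) order_tendstoD(2)[OF cdf_lim_at_bot] unfolding F_def by auto
      then obtain t where "F t < s" unfolding eventually_at_bot_linorder by blast
      then have "t \<in> {t. F t \<le> s}" by simp
      with 2 show False by blast
    qed
    then show ?thesis using 2 unfolding F_def by simp
  next
    case 3
    obtain M where M: "\<And>t. t \<ge> M \<Longrightarrow> F t > s"
      using order_tendstoD(1)[OF cdf_lim_at_top_prob \<open>s < 1\<close>]
      unfolding F_def eventually_at_top_linorder by blast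
    have bdd: "bdd_above {t. F t \<le> s}"
      by (rule bdd_aboveI[of _ M]) (metis M linorder_not_le less_imp_le mem_Collect_eq)
    have "closed {t. F t \<le> s}"
      using cont by (intro closed_Collect_le) (auto intro: continuous_intros)
    define ts where "ts = Sup {t. F t \<le> s}"
    have ts: "F ts \<le> s"
      using closed_contains_Sup[OF 3(2) bdd \<open>closed _\<close>] unfolding ts_def by simp
    have sublevel: "{t. F t \<le> s} = {..ts}"
    proof
      show "{t. F t \<le> s} \<subseteq> {..ts}" unfolding ts_def using bdd by (auto intro: cSup_upper)
      show "{..ts} \<subseteq> {t. F t \<le> s}"
        using ts cdf_nondecreasing unfolding F_def by (auto intro: order_trans)
    qed
    obtain c where "ts \<le> c" "F c = s"
      using IVT'[of F ts s "max ts M"] ts M[of "max ts M"] continuous_on_subset[OF cont] by fastforce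
    then have "F ts = s" using sublevel by (metis atMost_iff dual_order.antisym mem_Collect_eq order_refl)
    then show ?thesis using sublevel unfolding F_def cdf_def2 by simp
  qed
qed

lemma atomless_uniform_variable:
  fixes lam :: "'a::{second_countable_topology, t1_space} measure"
  assumes "prob_space lam" "sets lam = sets (restrict_space borel \<Omega>)" "\<And>\<beta>. emeasure lam {\<beta>} = 0"
  obtains U :: "'a \<Rightarrow> real" where "U \<in> borel_measurable lam" "\<And>\<beta>. U \<beta> \<in> {0..1}"
    "\<And>s. s \<in> {0..1} \<Longrightarrow> measure lam {\<beta>\<in>space lam. U \<beta> \<le> s} = s"
proof -
  interpret prob_space lam by fact
  obtain \<psi> :: "'a \<Rightarrow> real" where "inj \<psi>" and \<psi>_borel: "\<psi> \<in> borel_measurable borel"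
    by (rule borel_measurable_injection_to_real)
  have \<psi>: "\<psi> \<in> borel_measurable lam"
    unfolding measurable_cong_sets[OF assms(2) refl] using \<psi>_borel by (rule measurable_restrict_space1)
  define \<nu> where "\<nu> = distr lam borel \<psi>"
  interpret \<nu>: real_distribution \<nu> unfolding \<nu>_def using \<psi> by simp
  have atomless: "measure \<nu> {t} = 0" for t
  proof -
    have "\<psi> -` {t} \<inter> space lam \<subseteq> {inv \<psi> t}" using \<open>inj \<psi>\<close> by (auto simp: inv_f_f)
    then have "\<psi> -` {t} \<inter> space lam = {} \<or> \<psi> -` {t} \<inter> space lam = {inv \<psi> t}"
      by (rule subset_singletonD)
    then have "measure lam (\<psi> -` {t} \<inter> space lam) = 0" using assms(3) by (auto simp: measure_def)
    then show ?thesis unfolding \<nu>_def using \<psi> by (simp add: measure_distr)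
  qed
  have cdf_borel: "cdf \<nu> \<in> borel_measurable borel"
    by (rule borel_measurable_mono) (simp add: mono_def \<nu>.cdf_nondecreasing)
  have "measure lam {\<beta>\<in>space lam. cdf \<nu> (\<psi> \<beta>) \<le> s} = s" if "s \<in> {0..1}" for s
  proof -
    have "{t. cdf \<nu> t \<le> s} \<in> sets borel"
      using cdf_borel unfolding borel_measurable_iff_le by simp
    then have "measure \<nu> {t. cdf \<nu> t \<le> s} = measure lam (\<psi> -` {t. cdf \<nu> t \<le> s} \<inter> space lam)"
      unfolding \<nu>_def using \<psi> by (subst measure_distr) auto
    also have "\<psi> -` {t. cdf \<nu> t \<le> s} \<inter> space lam = {\<beta>\<in>space lam. cdf \<nu> (\<psi> \<beta>) \<le> s}" by auto
    finally show ?thesis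
      using measure_cdf_sublevel[OF \<nu>.real_distribution_axioms atomless] that by simp
  qed
  moreover have "(\<lambda>\<beta>. cdf \<nu> (\<psi> \<beta>)) \<in> borel_measurable lam"
    using measurable_compose[OF \<psi> cdf_borel] .
  moreover have "cdf \<nu> (\<psi> \<beta>) \<in> {0..1}" for \<beta>
    using \<nu>.cdf_nonneg \<nu>.cdf_bounded_prob by auto
  ultimately show ?thesis using that by blast
qed

lemma atomless_prescribed_partition:
  fixes lam :: "'a::{second_countable_topology, t1_space} measure"
  assumes lam: "prob_space lam" "sets lam = sets (restrict_space borel \<Omega>)" "\<And>\<beta>. emeasure lam {\<beta>} = 0"
    and p: "\<And>j. p j \<ge> 0" "(\<Sum>j<n. p j) = 1"
  obtains J :: "'a \<Rightarrow> nat" where "J \<in> measurable lam (count_space UNIV)" "\<And>\<beta>. J \<beta> < n"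
    "\<And>j. j < n \<Longrightarrow> measure lam {\<beta>\<in>space lam. J \<beta> = j} = p j"
proof -
  interpret prob_space lam by (rule lam(1))
  obtain U where U_meas: "U \<in> borel_measurable lam" and U01: "\<And>\<beta>. U \<beta> \<in> {0..1}"
    and U_unif: "\<And>s. s \<in> {0..1} \<Longrightarrow> measure lam {\<beta>\<in>space lam. U \<beta> \<le> s} = s"
    using atomless_uniform_variable[OF lam] by blast
  define S where "S j = (\<Sum>i<j. p i)" for j
  have S_mono: "i \<le> j \<Longrightarrow> S i \<le> S j" for i j
    unfolding S_def using p(1) by (intro sum_mono2) auto
  have "n > 0" using p(2) by (cases n) auto
  have S01: "j \<le> n \<Longrightarrow> S j \<in> {0..1}" for j
    using S_mono[of 0 j] S_mono[of j n] p(2) unfolding S_def by simp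
  define J where "J \<beta> = (LEAST j. U \<beta> \<le> S (Suc j))" for \<beta>
  have ex: "U \<beta> \<le> S (Suc (n - 1))" for \<beta> using \<open>n > 0\<close> U01[of \<beta>] p(2) by (simp add: S_def)
  have J_le_iff: "J \<beta> \<le> j \<longleftrightarrow> U \<beta> \<le> S (Suc j)" for \<beta> j
  proof
    assume "J \<beta> \<le> j"
    have "U \<beta> \<le> S (Suc (J \<beta>))" unfolding J_def by (rule LeastI) (rule ex)
    also have "\<dots> \<le> S (Suc j)" using \<open>J \<beta> \<le> j\<close> by (intro S_mono) simp
    finally show "U \<beta> \<le> S (Suc j)" .
  qed (simp add: J_def Least_le)
  have J_lt: "J \<beta> < n" for \<beta>
    using J_le_iff[of \<beta> "n - 1"] ex \<open>n > 0\<close> by simp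
  have below: "{\<beta>\<in>space lam. J \<beta> < j} = (if j = 0 then {} else {\<beta>\<in>space lam. U \<beta> \<le> S j})" for j
    by (cases j) (auto simp: less_Suc_eq_le J_le_iff)
  have below_sets: "{\<beta>\<in>space lam. J \<beta> < j} \<in> sets lam" for j
    using U_meas unfolding below by (auto simp: borel_measurable_iff_le)
  have below_measure: "measure lam {\<beta>\<in>space lam. J \<beta> < j} = S j" if "j \<le> n" for j
    unfolding below using U_unif[OF S01[OF that]] by (simp add: S_def)
  have level: "{\<beta>\<in>space lam. J \<beta> = j} = {\<beta>\<in>space lam. J \<beta> < Suc j} - {\<beta>\<in>space lam. J \<beta> < j}" for j
    by auto
  have "J \<in> measurable lam (count_space UNIV)"
    unfolding measurable_count_space_eq2_countable
  proof (intro conjI ballI)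
    fix j :: nat
    have "J -` {j} \<inter> space lam = {\<beta>\<in>space lam. J \<beta> = j}" by auto
    then show "J -` {j} \<inter> space lam \<in> sets lam" using level below_sets by auto
  qed simp
  moreover have "measure lam {\<beta>\<in>space lam. J \<beta> = j} = p j" if "j < n" for j
  proof -
    have "measure lam {\<beta>\<in>space lam. J \<beta> = j} = S (Suc j) - S j"
      unfolding level using that below_sets
      by (subst finite_measure_Diff) (auto simp: below_measure)
    then show ?thesis by (simp add: S_def)
  qed
  ultimately show ?thesis using that J_lt by blast
qed

lemma finite_range_enumeration:
  fixes \<kappa> :: "'b \<Rightarrow> 'c"
  assumes "finite (range \<kappa>)"
  obtains q :: "'b \<Rightarrow> nat" and n :: nat and y :: "nat \<Rightarrow> 'b"
  where "\<And>z. q z < n" "\<And>z j. q z = j \<longleftrightarrow> j < n \<and> \<kappa> z = \<kappa> (y j)"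
proof -
  define n where "n = card (range \<kappa>)"
  obtain e where e: "bij_betw e {..<n} (range \<kappa>)"
    using ex_bij_betw_nat_finite[OF assms] unfolding n_def atLeast0LessThan by blast
  define q where "q z = inv_into {..<n} e (\<kappa> z)" for z
  define y where "y j = (SOME z. \<kappa> z = e j)" for j
  have e_q: "e (q z) = \<kappa> z" for z
    unfolding q_def using bij_betw_inv_into_right[OF e] by simp
  have q_lt: "q z < n" for z
  proof -
    have "\<kappa> z \<in> e ` {..<n}" using e by (simp add: bij_betw_def)
    then have "q z \<in> {..<n}" unfolding q_def by (rule inv_into_into)
    then show ?thesis by simp
  qed
  have \<kappa>_y: "\<kappa> (y j) = e j" if "j < n" for j
  proof -
    have "e j \<in> range \<kappa>" using e that by (auto simp: bij_betw_def)
    then have "\<exists>z. \<kappa> z = e j" by auto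
    then show ?thesis unfolding y_def by (rule someI_ex)
  qed
  have "q z = j \<longleftrightarrow> j < n \<and> \<kappa> z = \<kappa> (y j)" for z j
  proof
    assume "j < n \<and> \<kappa> z = \<kappa> (y j)"
    then have "e (q z) = e j" "j < n" using e_q \<kappa>_y by auto
    then show "q z = j" using e q_lt unfolding bij_betw_def by (auto dest: inj_onD)
  qed (use e_q q_lt \<kappa>_y in auto)
  with q_lt show ?thesis by (rule that)
qed

lemma finite_range_floor_quotients:
  fixes Fs :: "('n \<Rightarrow> real) set"
  assumes "finite Fs" "\<And>g. g \<in> Fs \<Longrightarrow> bounded (range g)" "\<tau> > 0"
  shows "finite (range (\<lambda>z. restrict (\<lambda>g. \<lfloor>g z / \<tau>\<rfloor>) Fs))"
proof -
  have "\<forall>g\<in>Fs. \<exists>b. \<forall>z. \<bar>g z\<bar> \<le> b" using assms(2) unfolding bounded_iff by auto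
  then have "\<exists>B. \<forall>g\<in>Fs. \<forall>z. \<bar>g z\<bar> \<le> B g" by (rule bchoice)
  then obtain B where B: "\<And>g z. g \<in> Fs \<Longrightarrow> \<bar>g z\<bar> \<le> B g" by blast
  have "range (\<lambda>z. restrict (\<lambda>g. \<lfloor>g z / \<tau>\<rfloor>) Fs) \<subseteq> PiE Fs (\<lambda>g. {- \<lceil>B g / \<tau>\<rceil> - 1 .. \<lceil>B g / \<tau>\<rceil>})"
  proof (rule image_subsetI)
    fix z
    have "\<lfloor>g z / \<tau>\<rfloor> \<in> {- \<lceil>B g / \<tau>\<rceil> - 1 .. \<lceil>B g / \<tau>\<rceil>}" if "g \<in> Fs" for g
    proof -
      have "\<bar>g z / \<tau>\<bar> \<le> B g / \<tau>" using B[OF that, of z] assms(3) by (simp add: abs_divide divide_right_mono)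
      also have "\<dots> \<le> of_int \<lceil>B g / \<tau>\<rceil>" by (rule le_of_int_ceiling)
      finally have "\<bar>g z / \<tau>\<bar> \<le> of_int \<lceil>B g / \<tau>\<rceil>" .
      then show ?thesis unfolding abs_le_iff by (auto simp: le_floor_iff floor_le_iff)
    qed
    then show "restrict (\<lambda>g. \<lfloor>g z / \<tau>\<rfloor>) Fs \<in> PiE Fs (\<lambda>g. {- \<lceil>B g / \<tau>\<rceil> - 1 .. \<lceil>B g / \<tau>\<rceil>})"
      by (simp add: restrict_PiE_iff)
  qed
  then show ?thesis
    by (rule finite_subset) (intro finite_PiE assms(1) finite_atLeastAtMost_int)
qed

lemma finite_quantizer:
  fixes Fs :: "('n::topological_space \<Rightarrow> real) set"
  assumes "finite Fs" "\<And>g. g \<in> Fs \<Longrightarrow> g \<in> borel_measurable borel \<and> bounded (range g)" "\<tau> > 0"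
  obtains q :: "'n \<Rightarrow> nat" and n :: nat and y :: "nat \<Rightarrow> 'n"
  where "q \<in> measurable borel (count_space UNIV)" "\<And>z. q z < n"
    "\<And>g z. g \<in> Fs \<Longrightarrow> \<bar>g z - g (y (q z))\<bar> \<le> \<tau>"
proof -
  define \<kappa> where "\<kappa> z = restrict (\<lambda>g. \<lfloor>g z / \<tau>\<rfloor>) Fs" for z
  have \<kappa>_eq_iff: "\<kappa> z = \<kappa> z' \<longleftrightarrow> (\<forall>g\<in>Fs. \<lfloor>g z / \<tau>\<rfloor> = \<lfloor>g z' / \<tau>\<rfloor>)" for z z'
  proof
    assume eq: "\<kappa> z = \<kappa> z'"
    show "\<forall>g\<in>Fs. \<lfloor>g z / \<tau>\<rfloor> = \<lfloor>g z' / \<tau>\<rfloor>"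
    proof
      fix g assume "g \<in> Fs"
      moreover have "\<kappa> z g = \<kappa> z' g" using eq by simp
      ultimately show "\<lfloor>g z / \<tau>\<rfloor> = \<lfloor>g z' / \<tau>\<rfloor>" by (simp add: \<kappa>_def)
    qed
  qed (simp add: \<kappa>_def cong: restrict_cong)
  have "finite (range \<kappa>)"
    unfolding \<kappa>_def using assms by (intro finite_range_floor_quotients) auto
  then obtain q :: "'n \<Rightarrow> nat" and n y where q_lt: "\<And>z. q z < n"
    and q_iff: "\<And>z j. q z = j \<longleftrightarrow> j < n \<and> \<kappa> z = \<kappa> (y j)"
    using finite_range_enumeration by blast
  have "\<bar>g z - g (y (q z))\<bar> \<le> \<tau>" if "g \<in> Fs" for g z
  proof -
    have "\<lfloor>g z / \<tau>\<rfloor> = \<lfloor>g (y (q z)) / \<tau>\<rfloor>"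
      using q_iff[of z "q z"] \<kappa>_eq_iff that by blast
    then have "\<bar>g z / \<tau> - g (y (q z)) / \<tau>\<bar> < 1" by linarith
    then show ?thesis using \<open>\<tau> > 0\<close> by (simp add: diff_divide_distrib[symmetric] abs_divide)
  qed
  moreover have "q \<in> measurable borel (count_space UNIV)"
    unfolding measurable_count_space_eq2_countable
  proof (intro conjI ballI)
    fix j
    have "q -` {j} \<inter> space borel =
        (if j < n then {z \<in> space borel. \<forall>g\<in>Fs. \<lfloor>g z / \<tau>\<rfloor> = \<lfloor>g (y j) / \<tau>\<rfloor>} else {})"
      using q_iff \<kappa>_eq_iff by auto
    also have "\<dots> \<in> sets borel"
    proof (cases "j < n")
      case True
      have "{z \<in> space borel. \<lfloor>g z / \<tau>\<rfloor> = \<lfloor>g (y j) / \<tau>\<rfloor>} \<in> sets borel" if "g \<in> Fs" for g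
      proof -
        have [measurable]: "g \<in> borel_measurable borel" using assms(2) that by blast
        show ?thesis by measurable
      qed
      then have "{z \<in> space borel. \<forall>g\<in>Fs. \<lfloor>g z / \<tau>\<rfloor> = \<lfloor>g (y j) / \<tau>\<rfloor>} \<in> sets borel"
        by (rule sets.sets_Collect_finite_All[OF _ assms(1)])
      then show ?thesis using True by simp
    qed simp
    finally show "q -` {j} \<inter> space borel \<in> sets borel" .
  qed simp
  ultimately show ?thesis using that q_lt by blast
qed

lemma dF_close_outputs_close:
  fixes xF :: "'a \<Rightarrow> 'm::{metric_space, second_countable_topology}" and h :: "'m \<Rightarrow> 'n::topological_space"
    and Fs :: "('n \<Rightarrow> real) set"
  assumes "prob_space lam" "xF \<in> borel_measurable lam" "finite (xF ` space lam)" "continuous_on UNIV h"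
    and "finite Fs" "\<forall>g\<in>Fs. continuous_on UNIV g \<and> bounded (range g)" "\<eta> > 0"
  obtains \<delta> where "\<delta> > 0" "\<And>x g. x \<in> borel_measurable lam \<Longrightarrow> dF lam x xF < \<delta> \<Longrightarrow> g \<in> Fs \<Longrightarrow>
      \<bar>(\<integral>\<beta>. g (h (x \<beta>)) \<partial>lam) - (\<integral>\<beta>. g (h (xF \<beta>)) \<partial>lam)\<bar> < \<eta>"
proof -
  have "\<forall>g\<in>Fs. \<forall>\<^sub>F \<delta> in at_right 0. \<forall>x\<in>borel_measurable lam. dF lam x xF < \<delta> \<longrightarrow>
      \<bar>(\<integral>\<beta>. g (h (x \<beta>)) \<partial>lam) - (\<integral>\<beta>. g (h (xF \<beta>)) \<partial>lam)\<bar> < \<eta>"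
  proof
    fix g assume "g \<in> Fs"
    then have gh: "continuous_on UNIV (\<lambda>m. g (h m))" "bounded (range (\<lambda>m. g (h m)))"
      using assms(4,6) by (auto intro: continuous_on_compose2 bounded_subset)
    show "\<forall>\<^sub>F \<delta> in at_right 0. \<forall>x\<in>borel_measurable lam. dF lam x xF < \<delta> \<longrightarrow>
        \<bar>(\<integral>\<beta>. g (h (x \<beta>)) \<partial>lam) - (\<integral>\<beta>. g (h (xF \<beta>)) \<partial>lam)\<bar> < \<eta>"
      by (rule eventually_dF_small_integral_close[OF assms(1-3) gh assms(7)])
  qed
  with assms(5) have "\<forall>\<^sub>F \<delta> in at_right 0. 0 < \<delta> \<and> (\<forall>g\<in>Fs. \<forall>x\<in>borel_measurable lam. dF lam x xF < \<delta> \<longrightarrow>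
      \<bar>(\<integral>\<beta>. g (h (x \<beta>)) \<partial>lam) - (\<integral>\<beta>. g (h (xF \<beta>)) \<partial>lam)\<bar> < \<eta>)"
    by (intro eventually_conj eventually_at_right_less eventually_ball_finite)
  then obtain \<delta> where "0 < \<delta>" "\<forall>g\<in>Fs. \<forall>x\<in>borel_measurable lam. dF lam x xF < \<delta> \<longrightarrow>
      \<bar>(\<integral>\<beta>. g (h (x \<beta>)) \<partial>lam) - (\<integral>\<beta>. g (h (xF \<beta>)) \<partial>lam)\<bar> < \<eta>"
    using eventually_happens'[OF trivial_limit_at_right_real] by blast
  then show ?thesis using that by blast
qed

lemma atomless_finite_valued_state_approximates_pattern:
  fixes lam :: "'a::{second_countable_topology, t1_space} measure"
    and h :: "'m::topological_space \<Rightarrow> 'n::topological_space" and Fs :: "('n \<Rightarrow> real) set"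
  assumes lam: "prob_space lam" "sets lam = sets (restrict_space borel \<Omega>)" "\<And>\<beta>. emeasure lam {\<beta>} = 0"
    and "surj h" "\<mu>F \<in> prob_measures"
    and Fs: "finite Fs" "\<And>g. g \<in> Fs \<Longrightarrow> g \<in> borel_measurable borel \<and> bounded (range g)" and "\<tau> > 0"
  obtains xF where "xF \<in> borel_measurable lam" "finite (xF ` space lam)"
    "\<And>g. g \<in> Fs \<Longrightarrow> \<bar>(\<integral>\<beta>. g (h (xF \<beta>)) \<partial>lam) - (\<integral>z. g z \<partial>\<mu>F)\<bar> \<le> \<tau>"
proof -
  interpret \<mu>F: prob_space \<mu>F using \<open>\<mu>F \<in> prob_measures\<close> unfolding prob_measures_def by simp
  have sets_\<mu>F: "sets \<mu>F = sets borel" using \<open>\<mu>F \<in> prob_measures\<close> unfolding prob_measures_def by simp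
  obtain q :: "'n \<Rightarrow> nat" and n y where q_borel: "q \<in> measurable borel (count_space UNIV)" and q_lt: "\<And>z. q z < n"
    and q_close: "\<And>g z. g \<in> Fs \<Longrightarrow> \<bar>g z - g (y (q z))\<bar> \<le> \<tau>"
    using finite_quantizer[OF Fs \<open>\<tau> > 0\<close>] by blast
  have q: "q \<in> measurable \<mu>F (count_space UNIV)"
    using q_borel by (simp add: measurable_cong_sets[OF sets_\<mu>F refl])
  define p where "p j = measure \<mu>F {z\<in>space \<mu>F. q z = j}" for j
  have index_integral: "(\<integral>z. f (q z) \<partial>\<mu>F) = (\<Sum>j<n. f j * p j)" for f :: "nat \<Rightarrow> real"
    unfolding p_def using q q_lt by (intro integral_finite_valued_index) auto
  have p_sum: "(\<Sum>j<n. p j) = 1"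
    using index_integral[of "\<lambda>_. 1"] \<mu>F.prob_space by simp
  have p_nonneg: "p j \<ge> 0" for j unfolding p_def by simp
  obtain J :: "'a \<Rightarrow> nat" where J: "J \<in> measurable lam (count_space UNIV)" "\<And>\<beta>. J \<beta> < n"
    and J_dist: "\<And>j. j < n \<Longrightarrow> measure lam {\<beta>\<in>space lam. J \<beta> = j} = p j"
    using atomless_prescribed_partition[OF lam p_nonneg p_sum] by blast
  define xF where "xF \<beta> = inv h (y (J \<beta>))" for \<beta>
  have "xF \<in> borel_measurable lam"
    unfolding xF_def using measurable_compose[OF J(1), of "\<lambda>j. inv h (y j)"] by simp
  moreover have "finite (xF ` space lam)"
  proof (rule finite_subset)
    show "xF ` space lam \<subseteq> (\<lambda>j. inv h (y j)) ` {..<n}" unfolding xF_def using J(2) by blast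
  qed simp
  moreover have "\<bar>(\<integral>\<beta>. g (h (xF \<beta>)) \<partial>lam) - (\<integral>z. g z \<partial>\<mu>F)\<bar> \<le> \<tau>" if "g \<in> Fs" for g
  proof -
    have g_borel: "g \<in> borel_measurable \<mu>F" and "bounded (range g)"
      using Fs(2)[OF that] measurable_cong_sets[OF sets_\<mu>F refl] by auto
    then obtain B where B: "\<And>z. \<bar>g z\<bar> \<le> B" unfolding bounded_iff by auto
    have "integrable \<mu>F g"
      using g_borel B by (intro \<mu>F.integrable_const_bound[where B=B]) auto
    moreover have "integrable \<mu>F (\<lambda>z. g (y (q z)))"
      using measurable_compose[OF q, of "\<lambda>j. g (y j)"] B
      by (intro \<mu>F.integrable_const_bound[where B=B]) auto
    ultimately have int_diff: "integrable \<mu>F (\<lambda>z. g z - g (y (q z)))"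
      and diff: "(\<integral>z. g z \<partial>\<mu>F) - (\<integral>z. g (y (q z)) \<partial>\<mu>F) = (\<integral>z. g z - g (y (q z)) \<partial>\<mu>F)"
      by auto
    have "(\<integral>\<beta>. g (h (xF \<beta>)) \<partial>lam) = (\<integral>\<beta>. g (y (J \<beta>)) \<partial>lam)"
      unfolding xF_def by (simp add: surj_f_inv_f[OF \<open>surj h\<close>])
    also have "\<dots> = (\<Sum>j<n. g (y j) * p j)"
      using prob_space.finite_measure[OF lam(1)] J
      by (subst integral_finite_valued_index) (auto simp: J_dist)
    also have "\<dots> = (\<integral>z. g (y (q z)) \<partial>\<mu>F)" by (rule index_integral[symmetric])
    finally have "\<bar>(\<integral>\<beta>. g (h (xF \<beta>)) \<partial>lam) - (\<integral>z. g z \<partial>\<mu>F)\<bar> = \<bar>\<integral>z. g z - g (y (q z)) \<partial>\<mu>F\<bar>"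
      by (simp only: abs_minus_commute diff)
    also have "\<dots> \<le> (\<integral>z. \<bar>g z - g (y (q z))\<bar> \<partial>\<mu>F)" by (rule integral_abs_bound)
    also have "\<dots> \<le> (\<integral>z. \<tau> \<partial>\<mu>F)"
      using int_diff q_close[OF that] by (intro integral_mono) auto
    also have "\<dots> = \<tau>" by (simp add: \<mu>F.prob_space)
    finally show ?thesis .
  qed
  ultimately show ?thesis using that by blast
qed

lemma output_measure_in_integral_nbhd:
  assumes "prob_space lam" "x \<in> borel_measurable lam" "h \<in> borel_measurable borel"
    and "\<And>g. g \<in> Fs \<Longrightarrow> g \<in> borel_measurable borel"
    and "\<And>g. g \<in> Fs \<Longrightarrow> \<bar>(\<integral>\<beta>. g (h (x \<beta>)) \<partial>lam) - (\<integral>z. g z \<partial>\<mu>)\<bar> < \<eta>"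
  shows "distr lam borel (h \<circ> x) \<in> integral_nbhd Fs \<eta> \<mu>"
proof -
  have hx: "h \<circ> x \<in> borel_measurable lam" using assms(2,3) by (rule measurable_comp)
  then have "distr lam borel (h \<circ> x) \<in> prob_measures"
    unfolding prob_measures_def using assms(1) by (simp add: prob_space.prob_space_distr)
  moreover have "(\<integral>z. g z \<partial>distr lam borel (h \<circ> x)) = (\<integral>\<beta>. g (h (x \<beta>)) \<partial>lam)" if "g \<in> Fs" for g
    using integral_distr[OF hx assms(4)[OF that]] by simp
  ultimately show ?thesis using assms(5) unfolding integral_nbhd_def by simp
qed

lemma pattern_ball_contains_outputs_near_finite_valued_state:
  fixes lam :: "'a::{second_countable_topology, t1_space} measure"
    and h :: "'m::{metric_space, second_countable_topology} \<Rightarrow> 'n::topological_space"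
  assumes lam: "prob_space lam" "sets lam = sets (restrict_space borel \<Omega>)" "\<And>\<beta>. emeasure lam {\<beta>} = 0"
    and "metrizes_weak_topology dP" "continuous_on UNIV h" "surj h" "\<mu>F \<in> prob_measures" "\<epsilon> > 0"
  obtains xF \<delta> where "xF \<in> borel_measurable lam" "\<delta> > 0"
    "\<And>x. x \<in> borel_measurable lam \<Longrightarrow> dF lam x xF < \<delta> \<Longrightarrow> dP (distr lam borel (h \<circ> x)) \<mu>F < \<epsilon>"
proof -
  obtain Fs \<eta> where "finite Fs" "\<eta> > 0" and Fs: "\<forall>g\<in>Fs. continuous_on UNIV g \<and> bounded (range g)"
    and nbhd: "integral_nbhd Fs \<eta> \<mu>F \<subseteq> {\<mu>. dP \<mu> \<mu>F < \<epsilon>}"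
    by (rule metrizes_weak_topology_ball_contains_integral_nbhd[OF assms(4,7,8)])
  have Fs_borel: "\<And>g. g \<in> Fs \<Longrightarrow> g \<in> borel_measurable borel"
    using Fs borel_measurable_continuous_onI by blast
  then have "\<And>g. g \<in> Fs \<Longrightarrow> g \<in> borel_measurable borel \<and> bounded (range g)"
    using Fs by blast
  then obtain xF where xF: "xF \<in> borel_measurable lam" "finite (xF ` space lam)"
    and xF_close: "\<And>g. g \<in> Fs \<Longrightarrow> \<bar>(\<integral>\<beta>. g (h (xF \<beta>)) \<partial>lam) - (\<integral>z. g z \<partial>\<mu>F)\<bar> \<le> \<eta>/2"
    using atomless_finite_valued_state_approximates_pattern[OF lam assms(6,7) \<open>finite Fs\<close> _ half_gt_zero[OF \<open>\<eta> > 0\<close>]]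
    by blast
  obtain \<delta> where "\<delta> > 0" and \<delta>: "\<And>x g. x \<in> borel_measurable lam \<Longrightarrow> dF lam x xF < \<delta> \<Longrightarrow> g \<in> Fs \<Longrightarrow>
      \<bar>(\<integral>\<beta>. g (h (x \<beta>)) \<partial>lam) - (\<integral>\<beta>. g (h (xF \<beta>)) \<partial>lam)\<bar> < \<eta>/2"
    using dF_close_outputs_close[OF lam(1) xF assms(5) \<open>finite Fs\<close> Fs half_gt_zero[OF \<open>\<eta> > 0\<close>]] by blast
  have "dP (distr lam borel (h \<circ> x)) \<mu>F < \<epsilon>" if "x \<in> borel_measurable lam" "dF lam x xF < \<delta>" for x
  proof -
    have "distr lam borel (h \<circ> x) \<in> integral_nbhd Fs \<eta> \<mu>F"
    proof (rule output_measure_in_integral_nbhd[OF lam(1) that(1) _ Fs_borel])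
      show "h \<in> borel_measurable borel" using assms(5) by (rule borel_measurable_continuous_onI)
      show "\<bar>(\<integral>\<beta>. g (h (x \<beta>)) \<partial>lam) - (\<integral>z. g z \<partial>\<mu>F)\<bar> < \<eta>" if "g \<in> Fs" for g
        using \<delta>[OF \<open>x \<in> _\<close> \<open>dF lam x xF < \<delta>\<close> that] xF_close[OF that] by linarith
    qed
    then show ?thesis using nbhd by blast
  qed
  then show ?thesis using that xF(1) \<open>\<delta> > 0\<close> by blast
qed

theorem theorem1:
  fixes \<Omega> :: "'a::euclidean_space set"
    and lam :: "'a measure"
    and Sys :: "real \<Rightarrow> (real \<Rightarrow> 'p::euclidean_space) \<Rightarrow> ('a \<Rightarrow> 'm::{metric_space, second_countable_topology})
                  \<Rightarrow> ('a \<Rightarrow> 'm) \<Rightarrow> bool"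
    and h :: "'m \<Rightarrow> 'n::polish_space"
    and dP :: "'n measure \<Rightarrow> 'n measure \<Rightarrow> real"
  assumes "compact \<Omega>"
    and "prob_space lam"
    and "sets lam = sets (restrict_space borel \<Omega>)"
    and "\<forall>\<beta>. emeasure lam {\<beta>} = 0"
    and "\<And>T u x0 xT. Sys T u x0 xT \<Longrightarrow> x0 \<in> borel_measurable lam \<Longrightarrow> xT \<in> borel_measurable lam"
    and "metrizes_weak_topology dP"
    and "ensemble_controllable lam Sys"
    and "continuous_on UNIV h"
    and "surj h"
  shows "pattern_controllable lam Sys h dP"
  unfolding pattern_controllable_def
proof (intro ballI allI impI)
  fix x0 :: "'a \<Rightarrow> 'm" and \<mu>F :: "'n measure" and \<epsilon> :: real
  assume x0: "x0 \<in> borel_measurable lam" and "\<mu>F \<in> prob_measures" "\<epsilon> > 0"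
  obtain xF \<delta> where "xF \<in> borel_measurable lam" "\<delta> > 0"
    and close: "\<And>x. x \<in> borel_measurable lam \<Longrightarrow> dF lam x xF < \<delta> \<Longrightarrow> dP (distr lam borel (h \<circ> x)) \<mu>F < \<epsilon>"
    using pattern_ball_contains_outputs_near_finite_valued_state[OF assms(2,3) _ assms(6,8,9)]
      assms(4) \<open>\<mu>F \<in> prob_measures\<close> \<open>\<epsilon> > 0\<close> by blast
  then obtain T u xT where "T > 0" "u \<in> borel_measurable borel" "Sys T u x0 xT" "dF lam xT xF < \<delta>"
    using assms(7) x0 unfolding ensemble_controllable_def by blast
  moreover have "xT \<in> borel_measurable lam" using assms(5) \<open>Sys T u x0 xT\<close> x0 .
  ultimately show "\<exists>T>0. \<exists>u\<in>borel_measurable borel. \<exists>xT. Sys T u x0 xT \<and> dP (distr lam borel (h \<circ> xT)) \<mu>F < \<epsilon>"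
    using close by blast
qed

end
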